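(* For every $p\in(1/2,1)$ and every $V\in\{G,B\}$ there exists $\underline{\epsilon}>0$ (depending on $V$ and $p$) such that $\mathbb{P}_{Y\text{-cas}}(\epsilon)<\mathbb{P}_{Y\text{-cas}}(0)$ for all $\epsilon\in(0,\underline{\epsilon})$.
   Context: Observational learning model: an item has true value $V\in\{G,B\}$; agents arrive sequentially, each receives a private binary signal equal to the "correct" signal with probability $p\in(1/2,1)$, and each agent is independently fake with probability $\epsilon\in[0,1)$ (a fake agent's recorded action is always $Y$ = buy). Define $a=p+(1-p)\epsilon$, $b=p(1-\epsilon)$, $\alpha=p/(1-p)$ and $\eta=\eta(\epsilon)=\log\big(a/(1-b)\big)/\log\alpha\in(0,1]$. Given $V$, let $p_f=a$ if $V=G$ and $p_f=1-b$ if $V=B$. Before any cascade, the agents' sufficient statistic $h$ evolves as the following random walk: $h_0=0$ and, independently at each step, $h$ increases by $\eta$ with probability $p_f$ (an observed $Y$) or decreases by $1$ with probability $1-p_f$ (an observed $N$); the walk is stopped the first time it leaves $[-1,1]$. Leaving above $1$ is a $Y$ cascade, leaving below $-1$ is an $N$ cascade. $\mathbb{P}_{Y\text{-cas}}(\epsilon)$ denotes the probability (given $V$) that the walk leaves $[-1,1]$ above $1$. (For $\epsilon=0$ one has $\eta=1$, so $\mathbb{P}_{Y\text{-cas}}(0)$ is the probability that the $\pm1$ walk from $0$ reaches $2$ before $-2$.) *)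

theory Defs
  imports Complex_Main
begin

datatype item_value = G | B

definition a_par :: "real \<Rightarrow> real \<Rightarrow> real" where
  "a_par p \<epsilon> = p + (1 - p) * \<epsilon>"

definition b_par :: "real \<Rightarrow> real \<Rightarrow> real" where
  "b_par p \<epsilon> = p * (1 - \<epsilon>)"

definition alpha_par :: "real \<Rightarrow> real" where
  "alpha_par p = p / (1 - p)"

definition eta :: "real \<Rightarrow> real \<Rightarrow> real" where
  "eta p \<epsilon> = ln (a_par p \<epsilon> / (1 - b_par p \<epsilon>)) / ln (alpha_par p)"

definition p_f :: "real \<Rightarrow> real \<Rightarrow> item_value \<Rightarrow> real" where
  "p_f p \<epsilon> V = (case V of G \<Rightarrow> a_par p \<epsilon> | B \<Rightarrow> 1 - b_par p \<epsilon>)"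

text \<open>ycas_within q e n h: probability that the walk started at h, stepping +e with
  probability q and -1 with probability 1-q, stopped at the first exit from [-1,1],
  has exited above 1 within at most n steps.\<close>
fun ycas_within :: "real \<Rightarrow> real \<Rightarrow> nat \<Rightarrow> real \<Rightarrow> real" where
  "ycas_within q e 0 h = (if h > 1 then 1 else 0)"
| "ycas_within q e (Suc n) h =
     (if h > 1 then 1 else if h < -1 then 0
      else q * ycas_within q e n (h + e) + (1 - q) * ycas_within q e n (h - 1))"

text \<open>Probability (given V) of a Y cascade: the walk from 0 ever leaves [-1,1] above 1.
  The event is the increasing union over n of exiting above within n steps.\<close>
definition P_Ycas :: "real \<Rightarrow> item_value \<Rightarrow> real \<Rightarrow> real" where
  "P_Ycas p V \<epsilon> = (SUP n. ycas_within (p_f p \<epsilon> V) (eta p \<epsilon>) n 0)"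

end

theory Submission imports Defs begin

text \<open>Write \<open>q\<close> for the probability of an up-step and \<open>t = q(1 - q)\<close>. For \<open>\<epsilon> > 0\<close> the
  up-step \<open>\<eta>\<close> lies in \<open>(0, 1)\<close>, and an explicit function \<open>U\<^sub>q\<close>, constant on each of
  \<open>{-1}, (-1,0), {0}, (0,1), {1}\<close>, is superharmonic for the walk whatever the value of \<open>\<eta>\<close>;
  hence the cascade probability is at most \<open>U\<^sub>q(0) = q\<^sup>2(1 + t)/(1 - t)\<close>. For \<open>\<epsilon> = 0\<close> the walk
  is the simple \<open>\<plusminus>1\<close> walk, and its first six steps alone already produce a cascade with
  probability \<open>q\<^sup>2(1 + 2t + 4t\<^sup>2)\<close>, which is strictly larger. As \<open>q\<close> depends continuously
  on \<open>\<epsilon>\<close>, the strict gap persists for small \<open>\<epsilon> > 0\<close>.\<close>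

lemma ycas_within_le_one:
  assumes "0 \<le> q" "q \<le> 1"
  shows "ycas_within q e n h \<le> 1"
proof (induction n arbitrary: h)
  case (Suc n)
  then show ?case using assms by (auto intro!: convex_bound_le)
qed simp

lemma ycas_within_le_superharmonic:
  fixes U :: "real \<Rightarrow> real"
  assumes "0 \<le> q" "q \<le> 1"
    and nonneg: "\<And>h. 0 \<le> U h"
    and above: "\<And>h. 1 < h \<Longrightarrow> 1 \<le> U h"
    and superharmonic: "\<And>h. -1 \<le> h \<Longrightarrow> h \<le> 1 \<Longrightarrow> q * U (h + e) + (1 - q) * U (h - 1) \<le> U h"
  shows "ycas_within q e n h \<le> U h"
proof (induction n arbitrary: h)
  case 0
  show ?case using nonneg above by simp
next
  case (Suc n)
  show ?case
  proof (cases "-1 \<le> h \<and> h \<le> 1")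
    case True
    then have "ycas_within q e (Suc n) h
        = q * ycas_within q e n (h + e) + (1 - q) * ycas_within q e n (h - 1)"
      by simp
    also have "\<dots> \<le> q * U (h + e) + (1 - q) * U (h - 1)"
      using Suc assms(1,2) by (intro add_mono mult_left_mono) auto
    also have "\<dots> \<le> U h"
      using True superharmonic by blast
    finally show ?thesis .
  qed (use nonneg above in auto)
qed

lemma SUP_ycas_within_le_superharmonic:
  fixes U :: "real \<Rightarrow> real"
  assumes "0 \<le> q" "q \<le> 1"
    and "\<And>h. 0 \<le> U h" "\<And>h. 1 < h \<Longrightarrow> 1 \<le> U h"
    and "\<And>h. -1 \<le> h \<Longrightarrow> h \<le> 1 \<Longrightarrow> q * U (h + e) + (1 - q) * U (h - 1) \<le> U h"
  shows "(SUP n. ycas_within q e n h) \<le> U h"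
  using ycas_within_le_superharmonic[OF assms] by (intro cSUP_least) auto

lemma ycas_within_le_SUP:
  assumes "0 \<le> q" "q \<le> 1"
  shows "ycas_within q e n h \<le> (SUP n. ycas_within q e n h)"
  using ycas_within_le_one[OF assms] by (intro cSUP_upper bdd_aboveI2[where M = 1]) auto

lemma ycas_within_simple_walk_six_steps:
  "ycas_within q 1 6 0 = q\<^sup>2 * (1 + 2 * (q * (1 - q)) + 4 * (q * (1 - q))\<^sup>2)"
  by (simp add: numeral_eq_Suc power2_eq_square algebra_simps)

lemma one_minus_mult_one_minus_pos: "0 < 1 - q * (1 - q :: real)"
proof -
  have "q * (1 - q) = 1/4 - (q - 1/2)\<^sup>2"
    by (simp add: power2_eq_square algebra_simps)
  then show ?thesis
    using zero_le_power2[of "q - 1/2"] by linarith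
qed

definition upper_half_bound :: "real \<Rightarrow> real" where
  "upper_half_bound q = q / (1 - q * (1 - q))"

definition origin_bound :: "real \<Rightarrow> real" where
  "origin_bound q = q * upper_half_bound q + (1 - q) * (q * q * upper_half_bound q)"

definition cascade_majorant :: "real \<Rightarrow> real \<Rightarrow> real" where
  "cascade_majorant q h =
    (if 1 < h then 1
     else if h = 1 then q + (1 - q) * origin_bound q
     else if 0 < h then upper_half_bound q
     else if h = 0 then origin_bound q
     else if -1 < h then q * upper_half_bound q
     else if h = -1 then q * q * upper_half_bound q
     else 0)"

lemma cascade_majorant_values:
  "1 < h \<Longrightarrow> cascade_majorant q h = 1"
  "cascade_majorant q 1 = q + (1 - q) * origin_bound q"
  "0 < h \<Longrightarrow> h < 1 \<Longrightarrow> cascade_majorant q h = upper_half_bound q"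
  "cascade_majorant q 0 = origin_bound q"
  "-1 < h \<Longrightarrow> h < 0 \<Longrightarrow> cascade_majorant q h = q * upper_half_bound q"
  "cascade_majorant q (-1) = q * q * upper_half_bound q"
  "h < -1 \<Longrightarrow> cascade_majorant q h = 0"
  by (simp_all add: cascade_majorant_def)

lemma upper_half_bound_eq: "upper_half_bound q = q + (1 - q) * (q * upper_half_bound q)"
  using one_minus_mult_one_minus_pos[of q]
  unfolding upper_half_bound_def by (simp add: field_simps)

lemma origin_bound_eq: "origin_bound q = q\<^sup>2 * (1 + q * (1 - q)) / (1 - q * (1 - q))"
proof -
  have "origin_bound q = (q + (1 - q) * (q * q)) * upper_half_bound q"
    unfolding origin_bound_def by (simp add: algebra_simps)
  also have "q + (1 - q) * (q * q) = q * (1 + q * (1 - q))"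
    by (simp add: algebra_simps)
  finally show ?thesis
    unfolding upper_half_bound_def by (simp add: power2_eq_square)
qed

lemma upper_half_bound_bounds:
  assumes "0 < q" "q < 1"
  shows "0 < upper_half_bound q" "upper_half_bound q \<le> 1"
proof -
  have "q \<le> 1 - q * (1 - q)"
    using zero_le_square[of "1 - q"] by (simp add: algebra_simps)
  then show "0 < upper_half_bound q" "upper_half_bound q \<le> 1"
    using assms one_minus_mult_one_minus_pos[of q] by (simp_all add: upper_half_bound_def)
qed

lemma origin_bound_bounds:
  assumes "0 < q" "q < 1"
  shows "0 \<le> origin_bound q" "origin_bound q \<le> upper_half_bound q"
proof -
  note y = upper_half_bound_bounds[OF assms]
  show "0 \<le> origin_bound q"
    unfolding origin_bound_def using y assms by simp
  have "(1 - q) * (q * q) \<le> (1 - q) * 1"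
    using assms mult_le_one[of q q] by (intro mult_left_mono) auto
  then have "q + (1 - q) * (q * q) \<le> 1"
    by simp
  then have "(q + (1 - q) * (q * q)) * upper_half_bound q \<le> upper_half_bound q"
    using y by (simp add: mult_left_le_one_le)
  then show "origin_bound q \<le> upper_half_bound q"
    unfolding origin_bound_def by (simp add: algebra_simps)
qed

lemma cascade_majorant_bounds:
  assumes "0 < q" "q < 1"
  shows "0 \<le> cascade_majorant q h" "cascade_majorant q h \<le> 1"
    and "-1 < h \<Longrightarrow> h < 1 \<Longrightarrow> cascade_majorant q h \<le> upper_half_bound q"
proof -
  note y = upper_half_bound_bounds[OF assms] and z = origin_bound_bounds[OF assms]
  have qy: "0 \<le> q * upper_half_bound q" "q * upper_half_bound q \<le> upper_half_bound q"
    using y assms by (auto simp: mult_left_le_one_le)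
  have qqy: "0 \<le> q * q * upper_half_bound q" "q * q * upper_half_bound q \<le> upper_half_bound q"
    using y assms mult_le_one[of q q] by (auto intro: mult_left_le_one_le)
  have "(1 - q) * origin_bound q \<le> 1 - q" "0 \<le> (1 - q) * origin_bound q"
    using z y assms mult_left_mono[of "origin_bound q" 1 "1 - q"] by auto
  then have one: "0 \<le> q + (1 - q) * origin_bound q" "q + (1 - q) * origin_bound q \<le> 1"
    using assms by linarith+
  show "-1 < h \<Longrightarrow> h < 1 \<Longrightarrow> cascade_majorant q h \<le> upper_half_bound q"
    unfolding cascade_majorant_def using qy z by auto
  have "q * upper_half_bound q \<le> 1" "q * q * upper_half_bound q \<le> 1"
    using qy qqy y by linarith+
  then show "0 \<le> cascade_majorant q h" "cascade_majorant q h \<le> 1"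
    unfolding cascade_majorant_def using qy qqy y z one by (smt (verit))+
qed

text \<open>Whatever \<open>e \<in> (0, 1)\<close> is, an up-step from \<open>0\<close> lands in \<open>(0,1)\<close> and one from \<open>-1\<close> in
  \<open>(-1,0)\<close>, while one from \<open>(0,1)\<close> or \<open>(-1,0)\<close> lands where the majorant is at most \<open>1\<close>, resp.
  at most its value on \<open>(0,1)\<close>. The constants solve the harmonic equations in which these
  bounds are attained.\<close>

lemma cascade_majorant_superharmonic:
  assumes "0 < q" "q < 1" "0 < e" "e < 1" "-1 \<le> h" "h \<le> 1"
  shows "q * cascade_majorant q (h + e) + (1 - q) * cascade_majorant q (h - 1)
      \<le> cascade_majorant q h"
proof -
  consider "h = 1" | "0 < h" "h < 1" | "h = 0" | "-1 < h" "h < 0" | "h = -1"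
    using assms(5,6) by linarith
  then show ?thesis
  proof cases
    case 1
    then show ?thesis
      using assms by (simp add: cascade_majorant_values)
  next
    case 2
    have "cascade_majorant q (h + e) \<le> 1"
      using cascade_majorant_bounds(2)[OF assms(1,2)] .
    then have "q * cascade_majorant q (h + e) \<le> q"
      using assms mult_left_mono[of _ 1 q] by fastforce
    then show ?thesis
      using 2 upper_half_bound_eq[of q] by (simp add: cascade_majorant_values)
  next
    case 3
    then show ?thesis
      using assms by (simp add: cascade_majorant_values origin_bound_def)
  next
    case 4
    have "cascade_majorant q (h + e) \<le> upper_half_bound q"
      using 4 assms by (intro cascade_majorant_bounds(3)) auto
    then show ?thesis
      using 4 assms by (simp add: cascade_majorant_values mult_left_mono)
  next
    case 5
    then show ?thesis
      using assms by (simp add: cascade_majorant_values)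
  qed
qed

lemma origin_bound_less_simple_walk:
  assumes "0 < q" "q < 1"
  shows "origin_bound q < ycas_within q 1 6 0"
proof -
  define t where "t = q * (1 - q)"
  have t: "0 < t" "t \<le> 1/4"
    using assms zero_le_power2[of "q - 1/2"]
    by (auto simp: t_def power2_eq_square algebra_simps)
  have "1 + t < (1 + 2 * t + 4 * t\<^sup>2) * (1 - t)"
  proof -
    have "(1 + 2 * t + 4 * t\<^sup>2) * (1 - t) = 1 + t + t\<^sup>2 * (2 - 4 * t)"
      by (simp add: power2_eq_square algebra_simps)
    moreover have "0 < t\<^sup>2 * (2 - 4 * t)"
      using t by simp
    ultimately show ?thesis by linarith
  qed
  then have "(1 + t) / (1 - t) < 1 + 2 * t + 4 * t\<^sup>2"
    using t by (simp add: divide_simps)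
  then have "q\<^sup>2 * ((1 + t) / (1 - t)) < q\<^sup>2 * (1 + 2 * t + 4 * t\<^sup>2)"
    using assms by (intro mult_strict_left_mono) auto
  then show ?thesis
    unfolding origin_bound_eq ycas_within_simple_walk_six_steps t_def[symmetric] by simp
qed

lemma isCont_origin_bound: "isCont origin_bound q"
  unfolding origin_bound_def[abs_def] upper_half_bound_def
  using one_minus_mult_one_minus_pos[of q] by (intro continuous_intros) auto

lemma eta_bounds:
  assumes "1/2 < p" "p < 1" "0 < \<epsilon>" "\<epsilon> < 1"
  shows "0 < eta p \<epsilon>" "eta p \<epsilon> < 1"
proof -
  have den: "0 < 1 - b_par p \<epsilon>"
    using assms mult_left_mono[of "1 - \<epsilon>" 1 p] unfolding b_par_def by linarith
  have "(2 * p - 1) * \<epsilon> < (2 * p - 1) * 1"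
    using assms by (intro mult_strict_left_mono) auto
  then have lower: "1 < a_par p \<epsilon> / (1 - b_par p \<epsilon>)"
    using den unfolding a_par_def b_par_def by (simp add: algebra_simps)
  have "(1 - p) * (1 - p) < p * p"
    using mult_strict_mono[of "1 - p" p "1 - p" p] assms by simp
  then have "(1 - p) * (1 - p) * \<epsilon> < p * p * \<epsilon>"
    using assms by simp
  then have "a_par p \<epsilon> * (1 - p) < p * (1 - b_par p \<epsilon>)"
    unfolding a_par_def b_par_def by (simp add: algebra_simps)
  then have upper: "a_par p \<epsilon> / (1 - b_par p \<epsilon>) < alpha_par p"
    using den assms unfolding alpha_par_def by (simp add: divide_simps mult.commute)
  have "0 < ln (a_par p \<epsilon> / (1 - b_par p \<epsilon>))"
    "ln (a_par p \<epsilon> / (1 - b_par p \<epsilon>)) < ln (alpha_par p)"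
    using lower upper by simp_all
  then show "0 < eta p \<epsilon>" "eta p \<epsilon> < 1"
    unfolding eta_def by simp_all
qed

lemma eta_zero:
  assumes "1/2 < p" "p < 1"
  shows "eta p 0 = 1"
proof -
  have "1 < alpha_par p"
    using assms unfolding alpha_par_def by simp
  then have "ln (alpha_par p) \<noteq> 0"
    by simp
  then show ?thesis
    unfolding eta_def a_par_def b_par_def alpha_par_def by simp
qed

lemma p_f_bounds:
  assumes "1/2 < p" "p < 1" "0 \<le> \<epsilon>" "\<epsilon> < 1"
  shows "0 < p_f p \<epsilon> V" "p_f p \<epsilon> V < 1"
proof -
  have "(1 - p) * \<epsilon> < 1 - p" "p * \<epsilon> < p" "0 \<le> (1 - p) * \<epsilon>" "0 \<le> p * \<epsilon>"
    using assms by simp_all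
  then show "0 < p_f p \<epsilon> V" "p_f p \<epsilon> V < 1"
    unfolding p_f_def a_par_def b_par_def by (cases V; simp add: algebra_simps)+
qed

lemma isCont_p_f: "isCont (\<lambda>\<epsilon>. p_f p \<epsilon> V) \<epsilon>"
  unfolding p_f_def a_par_def b_par_def by (cases V) (simp_all add: continuous_intros)

lemma P_Ycas_le_origin_bound:
  assumes "1/2 < p" "p < 1" "0 < \<epsilon>" "\<epsilon> < 1"
  shows "P_Ycas p V \<epsilon> \<le> origin_bound (p_f p \<epsilon> V)"
proof -
  note q = p_f_bounds[OF assms(1,2), of \<epsilon> V] and e = eta_bounds[OF assms]
  have "P_Ycas p V \<epsilon> \<le> cascade_majorant (p_f p \<epsilon> V) 0"
    unfolding P_Ycas_def using assms q e cascade_majorant_bounds(1)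
    by (intro SUP_ycas_within_le_superharmonic cascade_majorant_superharmonic)
      (auto simp: cascade_majorant_values)
  then show ?thesis
    by (simp add: cascade_majorant_values)
qed

lemma simple_walk_six_steps_le_P_Ycas_zero:
  assumes "1/2 < p" "p < 1"
  shows "ycas_within (p_f p 0 V) 1 6 0 \<le> P_Ycas p V 0"
  unfolding P_Ycas_def eta_zero[OF assms]
  using p_f_bounds[OF assms, of 0 V] by (intro ycas_within_le_SUP) auto

theorem theorem2:
  fixes p :: real and V :: item_value
  assumes "1/2 < p" and "p < 1"
  shows "\<exists>\<epsilon>0 > 0. \<forall>\<epsilon>. 0 < \<epsilon> \<and> \<epsilon> < \<epsilon>0 \<longrightarrow> P_Ycas p V \<epsilon> < P_Ycas p V 0"
proof -
  define q where "q = (\<lambda>\<epsilon>. p_f p \<epsilon> V)"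
  define L where "L = ycas_within (q 0) 1 6 0"
  have "origin_bound (q 0) < L"
    unfolding L_def q_def using p_f_bounds[OF assms] by (intro origin_bound_less_simple_walk) auto
  moreover have "isCont (\<lambda>\<epsilon>. origin_bound (q \<epsilon>)) 0"
    unfolding q_def using isCont_p_f isCont_origin_bound by (rule isCont_o2)
  ultimately have "\<forall>\<^sub>F \<epsilon> in at 0. origin_bound (q \<epsilon>) < L"
    by (auto simp: isCont_def dest: order_tendstoD(2))
  then obtain d where d: "0 < d" "\<And>\<epsilon>. \<epsilon> \<noteq> 0 \<Longrightarrow> dist \<epsilon> 0 < d \<Longrightarrow> origin_bound (q \<epsilon>) < L"
    unfolding eventually_at by blast
  show ?thesis
  proof (intro exI[of _ "min d 1"] conjI allI impI)
    fix \<epsilon> :: real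
    assume \<epsilon>: "0 < \<epsilon> \<and> \<epsilon> < min d 1"
    have "P_Ycas p V \<epsilon> \<le> origin_bound (q \<epsilon>)"
      unfolding q_def using assms \<epsilon> by (intro P_Ycas_le_origin_bound) auto
    also have "\<dots> < L"
      using d \<epsilon> by auto
    also have "L \<le> P_Ycas p V 0"
      unfolding L_def q_def using assms by (rule simple_walk_six_steps_le_P_Ycas_zero)
    finally show "P_Ycas p V \<epsilon> < P_Ycas p V 0" .
  qed (use d in simp)
qed

end
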